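(* Let $X$ be an infinite zero-dimensional compact Hausdorff space. Then $X$ is h-homogeneous if and only if $X$ is partition-homogeneous.
   Context: $X$ is h-homogeneous if every nonempty clopen subset of $X$ is homeomorphic to $X$. $X$ is partition-homogeneous if for any two finite ordered partitions of $X$ into the same number $m$ of (nonempty) clopen sets, $(A_1,\dots,A_m)$ and $(B_1,\dots,B_m)$, there is a homeomorphism $h$ of $X$ with $hA_i=B_i$ for $i=1,\dots,m$. *)

theory Defs
  imports "HOL-Analysis.Analysis"
begin

definition clopen_in :: "'a topology \<Rightarrow> 'a set \<Rightarrow> bool" where
  "clopen_in X S \<longleftrightarrow> closedin X S \<and> openin X S"

definition h_homogeneous :: "'a topology \<Rightarrow> bool" where
  "h_homogeneous X \<longleftrightarrow>
     (\<forall>S. clopen_in X S \<and> S \<noteq> {} \<longrightarrow> (subtopology X S) homeomorphic_space X)"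

definition clopen_partition :: "'a topology \<Rightarrow> nat \<Rightarrow> (nat \<Rightarrow> 'a set) \<Rightarrow> bool" where
  "clopen_partition X m A \<longleftrightarrow>
     (\<forall>i<m. clopen_in X (A i) \<and> A i \<noteq> {}) \<and>
     (\<forall>i<m. \<forall>j<m. i \<noteq> j \<longrightarrow> A i \<inter> A j = {}) \<and>
     (\<Union>i<m. A i) = topspace X"

definition partition_homogeneous :: "'a topology \<Rightarrow> bool" where
  "partition_homogeneous X \<longleftrightarrow>
     (\<forall>m A B. clopen_partition X m A \<and> clopen_partition X m B \<longrightarrow>
        (\<exists>h. homeomorphic_map X X h \<and> (\<forall>i<m. h ` A i = B i)))"

end

theory Submission
  imports Defs
begin

(* In a partition-homogeneous space any two nonempty proper clopen sets S and T are homeomorphic,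
   since some homeomorphism of X carries the partition (S, X - S) onto (T, X - T); in particular
   S is infinite, being homeomorphic to X - S. Splitting S by a separating clopen set into
   nonempty clopen pieces S1 and S2, the set X - S1 is homeomorphic to S2, and pasting this
   homeomorphism with the identity of S1 maps X = S1 \<union> (X - S1) onto S1 \<union> S2 = S.
   Conversely, in an h-homogeneous space the pieces A i and B i of two partitions are both
   homeomorphic to X, and these homeomorphisms paste together. *)

lemma clopen_in_subset: "clopen_in X S \<Longrightarrow> S \<subseteq> topspace X"
  by (simp add: clopen_in_def closedin_subset)

lemma clopen_in_topspace: "clopen_in X (topspace X)"
  by (simp add: clopen_in_def)

lemma clopen_in_Int: "clopen_in X S \<Longrightarrow> clopen_in X T \<Longrightarrow> clopen_in X (S \<inter> T)"
  by (auto simp: clopen_in_def)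

lemma clopen_in_Diff: "clopen_in X S \<Longrightarrow> clopen_in X T \<Longrightarrow> clopen_in X (S - T)"
  by (auto simp: clopen_in_def)

lemma homeomorphic_map_pasting:
  assumes openA: "\<And>i. i \<in> I \<Longrightarrow> openin X (A i)"
    and disjA: "disjoint_family_on A I" and coverA: "(\<Union>i\<in>I. A i) = topspace X"
    and openB: "\<And>i. i \<in> I \<Longrightarrow> openin Y (B i)"
    and disjB: "disjoint_family_on B I" and coverB: "(\<Union>i\<in>I. B i) = topspace Y"
    and hom: "\<And>i. i \<in> I \<Longrightarrow> subtopology X (A i) homeomorphic_space subtopology Y (B i)"
  obtains h where "homeomorphic_map X Y h" "\<And>i. i \<in> I \<Longrightarrow> h ` A i = B i"
proof -
  have "\<forall>i\<in>I. \<exists>f g. homeomorphic_maps (subtopology X (A i)) (subtopology Y (B i)) f g"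
    using hom unfolding homeomorphic_space_def by blast
  then obtain f g
    where homs: "\<And>i. i \<in> I \<Longrightarrow> homeomorphic_maps (subtopology X (A i)) (subtopology Y (B i)) (f i) (g i)"
    by metis
  have AX: "A i \<subseteq> topspace X" and BY: "B i \<subseteq> topspace Y" if "i \<in> I" for i
    using coverA coverB that by blast+
  have f_onto: "f i ` A i = B i" and g_onto: "g i ` B i = A i" if "i \<in> I" for i
    using homs[OF that] AX[OF that] BY[OF that]
    by (metis homeomorphic_maps_map homeomorphic_imp_surjective_map topspace_subtopology_subset)+
  have g_f: "g i (f i x) = x" if "i \<in> I" "x \<in> A i" for i x
    using homs[OF that(1)] AX[OF that(1)] that(2) by (simp add: homeomorphic_maps_def Int_absorb1)
  have f_g: "f i (g i y) = y" if "i \<in> I" "y \<in> B i" for i y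
    using homs[OF that(1)] BY[OF that(1)] that(2) by (simp add: homeomorphic_maps_def Int_absorb1)
  have contf: "continuous_map (subtopology X (A i)) Y (f i)"
   and contg: "continuous_map (subtopology Y (B i)) X (g i)" if "i \<in> I" for i
    using homs[OF that] unfolding homeomorphic_maps_def continuous_map_in_subtopology by blast+
  have agreef: "f i x = f j x" if "i \<in> I" "j \<in> I" "x \<in> topspace X \<inter> A i \<inter> A j" for i j x
    using disjA that unfolding disjoint_family_on_def by (metis IntE IntI empty_iff)
  have agreeg: "g i y = g j y" if "i \<in> I" "j \<in> I" "y \<in> topspace Y \<inter> B i \<inter> B j" for i j y
    using disjB that unfolding disjoint_family_on_def by (metis IntE IntI empty_iff)
  obtain h where h: "continuous_map X Y h" "\<And>x i. \<lbrakk>i \<in> I; x \<in> topspace X \<inter> A i\<rbrakk> \<Longrightarrow> h x = f i x"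
    using pasting_lemma_exists[OF equalityD2[OF coverA] openA contf agreef] by blast
  obtain k where k: "continuous_map Y X k" "\<And>y i. \<lbrakk>i \<in> I; y \<in> topspace Y \<inter> B i\<rbrakk> \<Longrightarrow> k y = g i y"
    using pasting_lemma_exists[OF equalityD2[OF coverB] openB contg agreeg] by blast
  have "homeomorphic_maps X Y h k"
    unfolding homeomorphic_maps_def
  proof (intro conjI ballI h(1) k(1))
    fix x assume x: "x \<in> topspace X"
    then obtain i where i: "i \<in> I" "x \<in> A i" using coverA by blast
    have "f i x \<in> topspace Y \<inter> B i" using f_onto[OF i(1)] BY[OF i(1)] i(2) by blast
    then show "k (h x) = x" using h(2)[OF i(1)] k(2)[OF i(1)] g_f[OF i] x i(2) by simp
  next
    fix y assume y: "y \<in> topspace Y"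
    then obtain i where i: "i \<in> I" "y \<in> B i" using coverB by blast
    have "g i y \<in> topspace X \<inter> A i" using g_onto[OF i(1)] AX[OF i(1)] i(2) by blast
    then show "h (k y) = y" using h(2)[OF i(1)] k(2)[OF i(1)] f_g[OF i] y i(2) by simp
  qed
  moreover have "h ` A i = B i" if "i \<in> I" for i
  proof -
    have "h ` A i = f i ` A i" using h(2)[OF that] AX[OF that] by (intro image_cong) auto
    then show ?thesis using f_onto[OF that] by simp
  qed
  ultimately show thesis using that homeomorphic_map_maps by blast
qed

lemma homeomorphic_space_open_union:
  assumes "openin X A" "openin X B" "A \<inter> B = {}" "A \<union> B = topspace X"
    and "openin Y C" "openin Y D" "C \<inter> D = {}" "C \<union> D = topspace Y"
    and "subtopology X A homeomorphic_space subtopology Y C"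
    and "subtopology X B homeomorphic_space subtopology Y D"
  shows "X homeomorphic_space Y"
proof -
  define A' where "A' b = (if b then A else B)" for b
  define C' where "C' b = (if b then C else D)" for b
  have "disjoint_family_on A' UNIV" "disjoint_family_on C' UNIV"
    using assms(3,7) by (auto simp: disjoint_family_on_def A'_def C'_def)
  moreover have "(\<Union>b. A' b) = topspace X" "(\<Union>b. C' b) = topspace Y"
    using assms(4,8) by (simp_all add: A'_def C'_def UNIV_bool Un_commute)
  moreover have "openin X (A' b)" "openin Y (C' b)"
    and "subtopology X (A' b) homeomorphic_space subtopology Y (C' b)" for b
    using assms by (simp_all add: A'_def C'_def)
  ultimately obtain h where "homeomorphic_map X Y h"
    using homeomorphic_map_pasting[of UNIV X A' Y C'] by metis
  then show ?thesis by (rule homeomorphic_map_imp_homeomorphic_space)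
qed

lemma clopen_partition_complement:
  assumes "clopen_in X S" "S \<noteq> {}" "S \<noteq> topspace X"
  shows "clopen_partition X 2 (\<lambda>i. if i = 0 then S else topspace X - S)"
proof -
  have "clopen_in X (topspace X - S)" "S \<subseteq> topspace X"
    using assms(1) by (simp_all add: clopen_in_Diff clopen_in_topspace clopen_in_subset)
  moreover have "{..<2::nat} = {0, 1}" by auto
  ultimately show ?thesis
    using assms unfolding clopen_partition_def by auto
qed

lemma partition_homogeneous_homeomorphic_clopen:
  assumes "partition_homogeneous X"
    and "clopen_in X S" "S \<noteq> {}" "S \<noteq> topspace X"
    and "clopen_in X T" "T \<noteq> {}" "T \<noteq> topspace X"
  shows "subtopology X S homeomorphic_space subtopology X T"
proof -
  obtain h where h: "homeomorphic_map X X h"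
    and parts: "\<forall>i<2::nat. h ` (if i = 0 then S else topspace X - S) = (if i = 0 then T else topspace X - T)"
    using assms(1) clopen_partition_complement[OF assms(2-4)] clopen_partition_complement[OF assms(5-7)]
    unfolding partition_homogeneous_def by blast
  have "h ` S = T" using parts[rule_format, of 0] by simp
  have "S \<subseteq> topspace X" "T \<subseteq> topspace X"
    using assms(2,5) by (simp_all add: clopen_in_subset)
  then have "homeomorphic_map (subtopology X S) (subtopology X T) h"
    using h \<open>h ` S = T\<close> by (intro homeomorphic_map_subtopologies) (auto simp: Int_absorb1)
  then show ?thesis by (rule homeomorphic_map_imp_homeomorphic_space)
qed

lemma partition_homogeneous_clopen_infinite:
  assumes "infinite (topspace X)" "partition_homogeneous X"
    and S: "clopen_in X S" "S \<noteq> {}" "S \<noteq> topspace X"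
  shows "infinite S"
proof
  assume "finite S"
  have SX: "S \<subseteq> topspace X" using S(1) by (rule clopen_in_subset)
  define T where "T = topspace X - S"
  have T: "clopen_in X T" "T \<noteq> {}" "T \<noteq> topspace X"
    using S SX unfolding T_def by (auto simp: clopen_in_Diff clopen_in_topspace)
  obtain h where "homeomorphic_map (subtopology X S) (subtopology X T) h"
    using partition_homogeneous_homeomorphic_clopen[OF assms(2) S T] homeomorphic_space by blast
  then have "h ` S = T"
    using SX T_def by (metis Diff_subset homeomorphic_imp_surjective_map topspace_subtopology_subset)
  then have "finite T" using \<open>finite S\<close> by blast
  then show False using \<open>finite S\<close> assms(1) SX unfolding T_def by (metis finite_Diff2)
qed

lemma clopen_separating_points:
  assumes "X dim_le 0" "t1_space X" "p \<in> topspace X" "q \<in> topspace X" "p \<noteq> q"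
  obtains U where "clopen_in X U" "p \<in> U" "q \<notin> U"
proof -
  obtain W where W: "openin X W" "p \<in> W" "q \<notin> W"
    using assms(2-5) unfolding t1_space_def by metis
  have "neighbourhood_base_of (\<lambda>U. closedin X U \<and> openin X U) X"
    using assms(1) dimension_le_0_neighbourhood_base_of_clopen by blast
  then have "\<exists>U V. openin X U \<and> (closedin X V \<and> openin X V) \<and> p \<in> U \<and> U \<subseteq> V \<and> V \<subseteq> W"
    using W(1,2) unfolding neighbourhood_base_of by simp
  then obtain V where "clopen_in X V" "p \<in> V" "V \<subseteq> W"
    unfolding clopen_in_def by blast
  then show thesis using that W(3) by blast
qed

lemma h_homogeneous_imp_partition_homogeneous:
  assumes "h_homogeneous X"
  shows "partition_homogeneous X"
  unfolding partition_homogeneous_def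
proof (intro allI impI, elim conjE)
  fix m A B assume A: "clopen_partition X m A" and B: "clopen_partition X m B"
  have "subtopology X (A i) homeomorphic_space subtopology X (B i)" if "i \<in> {..<m}" for i
  proof -
    have "subtopology X (A i) homeomorphic_space X" "subtopology X (B i) homeomorphic_space X"
      using assms A B that unfolding h_homogeneous_def clopen_partition_def by auto
    then show ?thesis by (meson homeomorphic_space_sym homeomorphic_space_trans)
  qed
  moreover have "openin X (A i)" "openin X (B i)" if "i \<in> {..<m}" for i
    using A B that unfolding clopen_partition_def clopen_in_def by auto
  moreover have "disjoint_family_on A {..<m}" "disjoint_family_on B {..<m}"
    using A B unfolding clopen_partition_def disjoint_family_on_def by auto
  moreover have "(\<Union>i\<in>{..<m}. A i) = topspace X" "(\<Union>i\<in>{..<m}. B i) = topspace X"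
    using A B unfolding clopen_partition_def by auto
  ultimately obtain h where "homeomorphic_map X X h" "\<And>i. i \<in> {..<m} \<Longrightarrow> h ` A i = B i"
    using homeomorphic_map_pasting[of "{..<m}" X A X B] by blast
  then show "\<exists>h. homeomorphic_map X X h \<and> (\<forall>i<m. h ` A i = B i)" by auto
qed

lemma partition_homogeneous_imp_h_homogeneous:
  assumes "infinite (topspace X)" "X dim_le 0" "t1_space X" and ph: "partition_homogeneous X"
  shows "h_homogeneous X"
  unfolding h_homogeneous_def
proof (intro allI impI, elim conjE)
  fix S assume S: "clopen_in X S" "S \<noteq> {}"
  show "subtopology X S homeomorphic_space X"
  proof (cases "S = topspace X")
    case True
    then show ?thesis by simp
  next
    case False
    have SX: "S \<subseteq> topspace X" using S(1) by (rule clopen_in_subset)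
    have "infinite S" using partition_homogeneous_clopen_infinite assms(1) ph S False by blast
    then obtain p q where pq: "p \<in> S" "q \<in> S" "p \<noteq> q"
      by (metis Diff_iff infinite_imp_nonempty infinite_remove insertI1 ex_in_conv)
    then obtain U where U: "clopen_in X U" "p \<in> U" "q \<notin> U"
      using clopen_separating_points[OF assms(2,3)] SX by blast
    define S1 where "S1 = S \<inter> U"
    define S2 where "S2 = S - U"
    define R where "R = topspace X - S1"
    have clopen: "clopen_in X S1" "clopen_in X S2" "clopen_in X R"
      unfolding S1_def S2_def R_def
      using S(1) U(1) by (simp_all add: clopen_in_Int clopen_in_Diff clopen_in_topspace)
    have "R \<noteq> {}" "R \<noteq> topspace X" "S2 \<noteq> {}" "S2 \<noteq> topspace X"
      using pq U SX unfolding R_def S1_def S2_def by auto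
    then have "subtopology X R homeomorphic_space subtopology X S2"
      using partition_homogeneous_homeomorphic_clopen[OF ph clopen(3) _ _ clopen(2)] by blast
    moreover have "subtopology (subtopology X S) S1 = subtopology X S1"
      "subtopology (subtopology X S) S2 = subtopology X S2"
      by (auto simp: subtopology_subtopology S1_def S2_def Int_absorb1)
    moreover have "openin (subtopology X S) S1" "openin (subtopology X S) S2"
      using S(1) clopen unfolding clopen_in_def S1_def S2_def
      by (auto simp: openin_open_subtopology)
    moreover have "S1 \<union> S2 = topspace (subtopology X S)"
      using SX unfolding S1_def S2_def by auto
    ultimately have "X homeomorphic_space subtopology X S"
      using clopen SX unfolding clopen_in_def
      by (intro homeomorphic_space_open_union[of X S1 R _ S1 S2]) (auto simp: R_def S1_def S2_def)
    then show ?thesis by (rule homeomorphic_space_sym[THEN iffD1])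
  qed
qed

theorem proposition2p2:
  fixes X :: "'a topology"
  assumes "infinite (topspace X)"
    and "X dim_le 0"
    and "compact_space X"
    and "Hausdorff_space X"
  shows "h_homogeneous X \<longleftrightarrow> partition_homogeneous X"
  using h_homogeneous_imp_partition_homogeneous
    partition_homogeneous_imp_h_homogeneous[OF assms(1,2) Hausdorff_imp_t1_space[OF assms(4)]]
  by blast

end
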